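(* Let $\mathbb{F}$ be an arbitrary field. Let $P(t,y) \in \mathbb{F}[[t,y]]$ and $\varphi(t) \in \mathbb{F}[[t]]$ be formal power series such that $$P(t,y) = (y-\varphi(t))^e \cdot Q(t,y)$$ for some $Q \in \mathbb{F}[[t,y]]$ and some integer $e \ge 1$ that is invertible in $\mathbb{F}$. Suppose $\varphi(0)=0$ and $Q(0,0)\neq 0$. Then $$\varphi(t) = \mathcal{D}\left(\frac{y^2\cdot (\partial_y P)(ty,y)}{e\cdot P(ty,y)}\right),$$ where the quotient on the right-hand side is an element of $\mathbb{F}[[t,y]]$.
   Context: For a bivariate formal power series $F(t,y)=\sum_{i,j\ge 0}F_{i,j}t^iy^j$, the diagonal operator is $\mathcal{D}(F)(t) := \sum_{i\ge 0} F_{i,i}t^i$. Here $(\partial_y P)(ty,y)$ denotes the formal partial derivative of $P$ with respect to $y$, evaluated at $(ty,y)$. *)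

theory Defs
  imports "HOL-Computational_Algebra.Formal_Power_Series"
begin

unbundle fps_syntax

text \<open>Bivariate formal power series F[[t,y]] are represented as 'a fps fps:
  the outer variable is y (fps_X), the inner variable is t (fps_const fps_X).
  Thus the coefficient of t^i y^j in P is P $ j $ i.\<close>

definition subst_ty :: "'a::comm_ring_1 fps fps \<Rightarrow> 'a fps fps" where
  "subst_ty P = Abs_fps (\<lambda>j. Abs_fps (\<lambda>i. if i \<le> j then P $ (j - i) $ i else 0))"

definition diag :: "'a::comm_ring_1 fps fps \<Rightarrow> 'a fps" where
  "diag F = Abs_fps (\<lambda>i. F $ i $ i)"

end

theory Submission
  imports Defs
begin

unbundle fps_syntax

(* Since phi(0) = 0, the substitution t := ty turns y - phi(t) into y B with
   B(t,y) = 1 - t psi(ty), where psi(y) = phi(y)/y.  As Q is a unit, taking the logarithmic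
   derivative of P = (y - phi)^e Q gives
     y^2 (d_y P)(ty,y) / (e P(ty,y)) = y / B + y^2 (d_y Q / (e Q))(ty,y).
   The second summand only contains monomials t^i y^j with i < j and so has zero diagonal.
   For the first, 1/B = G(t,ty) with G = 1/(1 - t psi(y)) = 1 + t psi(y) + O(t^2), so the
   coefficient of t^n y^n in y G(t,ty) is the coefficient of t y^(n-1) in G, namely phi_n.
   The quotient is unique because F[[t,y]] is an integral domain. *)

lemma subst_ty_nth [simp]: "subst_ty F $ j $ i = (if i \<le> j then F $ (j - i) $ i else 0)"
  by (simp add: subst_ty_def)

lemma subst_ty_add: "subst_ty (F + G) = subst_ty F + subst_ty G"
  by (intro fps_ext) simp

lemma subst_ty_diff: "subst_ty (F - G) = subst_ty F - subst_ty G"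
  by (intro fps_ext) simp

lemma subst_ty_const_const [simp]: "subst_ty (fps_const (fps_const c)) = fps_const (fps_const c)"
  by (intro fps_ext) simp

lemma subst_ty_one [simp]: "subst_ty 1 = 1"
  using subst_ty_const_const[of 1] by simp

lemma subst_ty_of_nat [simp]: "subst_ty (of_nat n) = of_nat n"
  using subst_ty_const_const[of "of_nat n"] by (simp add: fps_of_nat)

lemma subst_ty_X [simp]: "subst_ty fps_X = fps_X"
  by (intro fps_ext) (auto simp: fps_X_def)

lemma subst_ty_eq_0_iff [simp]: "subst_ty F = 0 \<longleftrightarrow> F = 0"
proof
  assume S0: "subst_ty F = 0"
  show "F = 0"
  proof (intro fps_ext)
    fix j i
    have "F $ j $ i = subst_ty F $ (i + j) $ i"
      by simp
    then show "F $ j $ i = 0 $ j $ i"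
      using S0 by simp
  qed
qed (simp add: fps_eq_iff)

lemma subst_ty_mult: "subst_ty (F * G) = subst_ty F * subst_ty G"
proof (intro fps_ext)
  fix J i
  show "subst_ty (F * G) $ J $ i = (subst_ty F * subst_ty G) $ J $ i"
  proof (cases "i \<le> J")
    case True
    have lhs: "subst_ty (F * G) $ J $ i = (\<Sum>l=0..i. \<Sum>k=0..J-i. F$k$l * G$(J-i-k)$(i-l))"
      using True by (simp add: fps_mult_nth fps_sum_nth sum_distrib_left sum_distrib_right)
         (rule sum.swap)
    have rhs: "(subst_ty F * subst_ty G) $ J $ i = (\<Sum>l=0..i. \<Sum>m=0..J.
        (if l \<le> m then F$(m-l)$l else 0) * (if i-l \<le> J-m then G$(J-m-(i-l))$(i-l) else 0))"
      by (simp add: fps_mult_nth fps_sum_nth) (rule sum.swap)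
    have inner: "(\<Sum>k=0..J-i. F$k$l * G$(J-i-k)$(i-l)) = (\<Sum>m=0..J.
        (if l \<le> m then F$(m-l)$l else 0) * (if i-l \<le> J-m then G$(J-m-(i-l))$(i-l) else 0))"
      if "l \<le> i" for l
    proof -
      have "(\<Sum>m=0..J. (if l \<le> m then F$(m-l)$l else 0) * (if i-l \<le> J-m then G$(J-m-(i-l))$(i-l) else 0))
          = (\<Sum>m=0+l..(J-i)+l. (if l \<le> m then F$(m-l)$l else 0) * (if i-l \<le> J-m then G$(J-m-(i-l))$(i-l) else 0))"
        using that True by (intro sum.mono_neutral_right) auto
      also have "\<dots> = (\<Sum>k=0..J-i. F$k$l * G$(J-i-k)$(i-l))"
        unfolding sum.shift_bounds_cl_nat_ivl using that True
        by (intro sum.cong) (auto simp: add.commute)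
      finally show ?thesis by simp
    qed
    show ?thesis
      unfolding lhs rhs by (rule sum.cong[OF refl], rule inner) simp
  next
    case False
    then show ?thesis
      by (auto simp: fps_mult_nth fps_sum_nth intro!: sum.neutral)
  qed
qed

lemma subst_ty_power: "subst_ty (F ^ n) = subst_ty F ^ n"
  by (induction n) (simp_all add: subst_ty_mult)

(* scale_y G is G(t, ty). *)
definition scale_y :: "'a::comm_ring_1 fps fps \<Rightarrow> 'a fps fps" where
  "scale_y G = Abs_fps (\<lambda>j. fps_X ^ j * G $ j)"

lemma scale_y_nth [simp]: "scale_y G $ j = fps_X ^ j * G $ j"
  by (simp add: scale_y_def)

lemma scale_y_one [simp]: "scale_y 1 = 1"
  by (intro fps_ext) (simp add: fps_one_nth)

lemma scale_y_mult: "scale_y (G * H) = scale_y G * scale_y H"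
proof (rule fps_ext)
  fix n
  have "fps_X ^ n * (G $ m * H $ (n - m)) = fps_X ^ m * G $ m * (fps_X ^ (n - m) * H $ (n - m))"
    if "m \<le> n" for m
    using that by (simp add: power_add[symmetric] algebra_simps)
  then show "scale_y (G * H) $ n = (scale_y G * scale_y H) $ n"
    by (simp add: fps_mult_nth sum_distrib_left)
qed

lemma subst_ty_X_minus_const:
  assumes "\<phi> $ 0 = 0"
  shows "subst_ty (fps_X - fps_const \<phi>)
    = fps_X * scale_y (1 - fps_const fps_X * Abs_fps (\<lambda>j. fps_const (\<phi> $ Suc j)))"
proof (intro fps_ext)
  fix j i
  show "subst_ty (fps_X - fps_const \<phi>) $ j $ i
    = (fps_X * scale_y (1 - fps_const fps_X * Abs_fps (\<lambda>j. fps_const (\<phi> $ Suc j)))) $ j $ i"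
  proof (cases j)
    case (Suc k)
    have "fps_X ^ k * (fps_X * fps_const (\<phi> $ Suc k)) = fps_X ^ Suc k * fps_const (\<phi> $ Suc k)"
      by (simp add: algebra_simps)
    then show ?thesis
      using Suc by (auto simp: subst_ty_diff fps_X_nth fps_one_nth fps_X_power_mult_nth)
  qed (use assms in \<open>simp add: subst_ty_diff\<close>)
qed

lemma diag_add: "diag (F + G) = diag F + diag G"
  by (simp add: diag_def fps_ext)

lemma diag_X_mult_subst_ty: "diag (fps_X * subst_ty F) = 0"
  by (intro fps_ext) (auto simp: diag_def)

lemma diag_X_mult_scale_y: "diag (fps_X * scale_y G) = fps_X * Abs_fps (\<lambda>j. G $ j $ 1)"
  by (intro fps_ext) (simp add: diag_def fps_X_power_mult_nth)

lemma nth_1_of_inverse_1_minus_t_mult: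
  fixes F G :: "'a::comm_ring_1 fps fps"
  assumes "(1 - fps_const fps_X * F) * G = 1"
  shows "G $ j $ 1 = F $ j $ 0"
proof -
  have G: "G = 1 + fps_const fps_X * F * G"
    using assms by (simp add: algebra_simps)
  have "G = 1 + fps_const fps_X * F + fps_const (fps_X ^ 2) * (F * F * G)"
    by (subst G, subst G) (simp add: algebra_simps power2_eq_square)
  then have "G $ j $ 1 = (1 + fps_const fps_X * F + fps_const (fps_X ^ 2) * (F * F * G)) $ j $ 1"
    by (rule arg_cong)
  also have "\<dots> = F $ j $ 0"
    by (simp add: fps_one_nth fps_X_power_mult_nth)
  finally show ?thesis .
qed

lemma fps_dvd_1_if_nth_0_dvd_1:
  fixes f :: "'a::comm_ring_1 fps"
  assumes "f $ 0 dvd 1"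
  shows "f dvd 1"
proof -
  obtain y where "f $ 0 * y = 1"
    using assms by (metis dvdE)
  then have "f * fps_right_inverse f y = 1"
    by (rule fps_right_inverse)
  then show ?thesis
    by (metis dvdI)
qed

lemma fps_fps_dvd_1_if_nth_0_0_nonzero:
  fixes F :: "'a::field fps fps"
  assumes "F $ 0 $ 0 \<noteq> 0"
  shows "F dvd 1"
  using assms by (rule fps_dvd_1_if_nth_0_dvd_1[OF fps_is_unit_iff[THEN iffD2]])

lemma subst_ty_log_deriv:
  fixes A B C Q Q' :: "'a::comm_ring_1 fps fps"
  assumes "fps_deriv A = 1" and "subst_ty A = fps_X * B" and "B * C = 1"
    and "Q * Q' = 1" and "of_nat e * c = 1"
  shows "of_nat e * subst_ty (A ^ e * Q)
      * (fps_X * C + fps_X * subst_ty (fps_X * fps_deriv Q * Q' * fps_const (fps_const c)))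
    = fps_X ^ 2 * subst_ty (fps_deriv (A ^ e * Q))"
proof -
  define d where "d = e - 1"
  have e: "e = Suc d"
    using assms(5) unfolding d_def by (cases e) auto
  define k :: "'a fps fps" where "k = fps_const (fps_const c)"
  have ek: "of_nat e * k = 1"
    using assms(5) unfolding k_def by (metis fps_const_mult fps_const_1_eq_1 fps_of_nat)
  have SQ: "subst_ty Q * subst_ty Q' = 1"
    using assms(4) by (metis subst_ty_mult subst_ty_one)
  have pow: "(fps_X * B) ^ e = (fps_X * B) ^ d * fps_X * B"
    unfolding e by (simp add: mult.assoc)
  have SP: "subst_ty (A ^ e * Q) = (fps_X * B) ^ e * subst_ty Q"
    by (simp add: subst_ty_mult subst_ty_power assms(2))
  have SdP: "subst_ty (fps_deriv (A ^ e * Q))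
      = of_nat e * (fps_X * B) ^ d * subst_ty Q + (fps_X * B) ^ e * subst_ty (fps_deriv Q)"
    by (simp add: fps_deriv_power' assms(1,2) subst_ty_mult subst_ty_add subst_ty_power d_def)
  have "of_nat e * subst_ty (A ^ e * Q) * (fps_X * C + fps_X * subst_ty (fps_X * fps_deriv Q * Q' * k))
      = fps_X ^ 2 * (of_nat e * (fps_X * B) ^ d * subst_ty Q * (B * C)
        + (fps_X * B) ^ e * subst_ty (fps_deriv Q) * (subst_ty Q * subst_ty Q') * (of_nat e * k))"
    unfolding SP pow by (simp add: subst_ty_mult k_def algebra_simps power2_eq_square)
  also have "\<dots> = fps_X ^ 2 * subst_ty (fps_deriv (A ^ e * Q))"
    unfolding SdP by (simp add: assms(3) SQ ek)
  finally show ?thesis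
    unfolding k_def .
qed

theorem theorem3p1:
  fixes P Q :: "'a::field fps fps" and \<phi> :: "'a fps" and e :: nat
  assumes "e \<ge> 1" and "(of_nat e :: 'a) \<noteq> 0"
    and "P = (fps_X - fps_const \<phi>) ^ e * Q"
    and "\<phi> $ 0 = 0" and "Q $ 0 $ 0 \<noteq> 0"
  shows "(\<exists>R. of_nat e * subst_ty P * R = fps_X ^ 2 * subst_ty (fps_deriv P))
       \<and> (\<forall>R. of_nat e * subst_ty P * R = fps_X ^ 2 * subst_ty (fps_deriv P)
              \<longrightarrow> \<phi> = diag R)"
proof -
  define \<psi> where "\<psi> = Abs_fps (\<lambda>j. fps_const (\<phi> $ Suc j))"
  obtain G where G: "(1 - fps_const fps_X * \<psi>) * G = 1"
    using fps_fps_dvd_1_if_nth_0_0_nonzero[of "1 - fps_const fps_X * \<psi>"] by (auto elim: dvdE)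
  then have scale_y_G: "scale_y (1 - fps_const fps_X * \<psi>) * scale_y G = 1"
    by (metis scale_y_mult scale_y_one)
  obtain Q' where Q': "Q * Q' = 1"
    using fps_fps_dvd_1_if_nth_0_0_nonzero[OF assms(5)] by (auto elim: dvdE)
  define R where "R = fps_X * scale_y G
    + fps_X * subst_ty (fps_X * fps_deriv Q * Q' * fps_const (fps_const (inverse (of_nat e))))"
  have R: "of_nat e * subst_ty P * R = fps_X ^ 2 * subst_ty (fps_deriv P)"
    unfolding assms(3) R_def
  proof (rule subst_ty_log_deriv)
    show "subst_ty (fps_X - fps_const \<phi>) = fps_X * scale_y (1 - fps_const fps_X * \<psi>)"
      unfolding \<psi>_def by (rule subst_ty_X_minus_const[OF assms(4)])
  qed (simp_all add: scale_y_G Q' assms(2))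
  have "diag R = \<phi>"
    unfolding R_def diag_add diag_X_mult_subst_ty diag_X_mult_scale_y
    using nth_1_of_inverse_1_minus_t_mult[OF G] assms(4) by (auto simp: \<psi>_def fps_eq_iff)
  moreover have "of_nat e * subst_ty P \<noteq> 0"
  proof -
    have "(fps_X - fps_const \<phi>) $ 1 \<noteq> 0" "Q \<noteq> 0"
      using assms(5) by auto
    then show ?thesis
      using assms(2,3) by (auto simp flip: fps_of_nat)
  qed
  ultimately show ?thesis
    using R by (metis mult_left_cancel)
qed

end
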